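(* For all integers $n\geq 3$ and $k\geq 2$, the digraph $M(n,k)$ is highly arc-transitive, has in-degree and out-degree equal to $n-1$ at every vertex, and does not have property $Z$.
   Context: Construction of $M(n,k)$: let $F=\langle a_1\rangle*\cdots*\langle a_n\rangle$ be the free product of $n$ cyclic groups of order $k$. Form the digraph $T^*$ with vertex set $F\times\{1,\dots,n\}$, arcs in both directions between $(v,i)$ and $(v,j)$ for all $v\in F$, $i\neq j$, and "cycle arcs" $(v,i)\to(va_i,i)$. Form $T^*\otimes\vec K_2$ with vertex set $VT^*\times\{-,+\}$ and an arc $(x,-)\to(y,+)$ whenever $x\to y$ in $T^*$. $M(n,k)$ is obtained by identifying $((v,i),-)$ with $((va_i,i),+)$ for all $v,i$ (contracting the arcs coming from cycle arcs), keeping the remaining arcs $((v,i),-)\to((v,j),+)$, $i\ne j$. A $k$-arc is a sequence $(x_0,\dots,x_k)$ of vertices with $x_i\to x_{i+1}$; a digraph is highly arc-transitive if its automorphism group is transitive on $k$-arcs for every $k$. A digraph has property $Z$ if there is a digraph homomorphism from it onto the two-way infinite directed line (vertex set $\mathbb{Z}$, arcs $i\to i+1$). *)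

theory Defs
  imports Main
begin

definition is_karc :: "'a set \<Rightarrow> ('a \<Rightarrow> 'a \<Rightarrow> bool) \<Rightarrow> nat \<Rightarrow> 'a list \<Rightarrow> bool" where
  "is_karc V A k xs \<longleftrightarrow> length xs = Suc k \<and> set xs \<subseteq> V \<and>
     (\<forall>j<k. A (xs ! j) (xs ! Suc j))"

definition digraph_aut :: "'a set \<Rightarrow> ('a \<Rightarrow> 'a \<Rightarrow> bool) \<Rightarrow> ('a \<Rightarrow> 'a) \<Rightarrow> bool" where
  "digraph_aut V A g \<longleftrightarrow> bij_betw g V V \<and> (\<forall>x\<in>V. \<forall>y\<in>V. A x y \<longleftrightarrow> A (g x) (g y))"

definition highly_arc_transitive :: "'a set \<Rightarrow> ('a \<Rightarrow> 'a \<Rightarrow> bool) \<Rightarrow> bool" where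
  "highly_arc_transitive V A \<longleftrightarrow>
     (\<forall>k xs ys. is_karc V A k xs \<and> is_karc V A k ys \<longrightarrow>
        (\<exists>g. digraph_aut V A g \<and> map g xs = ys))"

definition in_degree :: "'a set \<Rightarrow> ('a \<Rightarrow> 'a \<Rightarrow> bool) \<Rightarrow> 'a \<Rightarrow> nat" where
  "in_degree V A x = card {y\<in>V. A y x}"

definition out_degree :: "'a set \<Rightarrow> ('a \<Rightarrow> 'a \<Rightarrow> bool) \<Rightarrow> 'a \<Rightarrow> nat" where
  "out_degree V A x = card {y\<in>V. A x y}"

definition has_property_Z :: "'a set \<Rightarrow> ('a \<Rightarrow> 'a \<Rightarrow> bool) \<Rightarrow> bool" where
  "has_property_Z V A \<longleftrightarrow>
     (\<exists>f :: 'a \<Rightarrow> int. (\<forall>x\<in>V. \<forall>y\<in>V. A x y \<longrightarrow> f y = f x + 1) \<and> f ` V = UNIV)"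

text \<open>Generators are indexed a_0, ..., a_(n-1). An element of the free product is
  represented by its unique reduced word: a list of pairs (i,e) standing for a_i^e with
  i < n, 0 < e < k, and consecutive indices distinct.\<close>

type_synonym fpword = "(nat \<times> nat) list"

definition fp_words :: "nat \<Rightarrow> nat \<Rightarrow> fpword set" where
  "fp_words n k = {w. (\<forall>(i,e)\<in>set w. i < n \<and> 0 < e \<and> e < k) \<and>
                      (\<forall>j. Suc j < length w \<longrightarrow> fst (w ! j) \<noteq> fst (w ! Suc j))}"

text \<open>Right multiplication v \<mapsto> v a_i on reduced words.\<close>
definition fp_rmul_gen :: "nat \<Rightarrow> fpword \<Rightarrow> nat \<Rightarrow> fpword" where
  "fp_rmul_gen k w i =
     (if w \<noteq> [] \<and> fst (last w) = i
      then (if Suc (snd (last w)) = k then butlast w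
            else butlast w @ [(i, Suc (snd (last w)))])
      else w @ [(i, 1)])"

definition Tstar_verts :: "nat \<Rightarrow> nat \<Rightarrow> (fpword \<times> nat) set" where
  "Tstar_verts n k = fp_words n k \<times> {..<n}"

definition Tstar_arc :: "nat \<Rightarrow> nat \<Rightarrow> fpword \<times> nat \<Rightarrow> fpword \<times> nat \<Rightarrow> bool" where
  "Tstar_arc n k x y \<longleftrightarrow> x \<in> Tstar_verts n k \<and> y \<in> Tstar_verts n k \<and>
     ((fst x = fst y \<and> snd x \<noteq> snd y) \<or>
      (snd y = snd x \<and> fst y = fp_rmul_gen k (fst x) (snd x)))"

text \<open>T* \<otimes> K_2: vertex set VT* \<times> {-,+}, encoded with False = - and True = +.\<close>
definition TK_verts :: "nat \<Rightarrow> nat \<Rightarrow> ((fpword \<times> nat) \<times> bool) set" where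
  "TK_verts n k = Tstar_verts n k \<times> UNIV"

definition TK_arc :: "nat \<Rightarrow> nat \<Rightarrow> (fpword \<times> nat) \<times> bool \<Rightarrow> (fpword \<times> nat) \<times> bool \<Rightarrow> bool" where
  "TK_arc n k p q \<longleftrightarrow> snd p = False \<and> snd q = True \<and> Tstar_arc n k (fst p) (fst q)"

definition M_ident :: "nat \<Rightarrow> nat \<Rightarrow> (((fpword \<times> nat) \<times> bool) \<times> ((fpword \<times> nat) \<times> bool)) set" where
  "M_ident n k = {(((v,i),False), ((fp_rmul_gen k v i, i), True)) | v i. (v,i) \<in> Tstar_verts n k}"

definition M_verts :: "nat \<Rightarrow> nat \<Rightarrow> ((fpword \<times> nat) \<times> bool) set set" where
  "M_verts n k = TK_verts n k // ((M_ident n k \<union> (M_ident n k)\<inverse>)\<^sup>*)"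

definition M_arc :: "nat \<Rightarrow> nat \<Rightarrow> ((fpword \<times> nat) \<times> bool) set \<Rightarrow> ((fpword \<times> nat) \<times> bool) set \<Rightarrow> bool" where
  "M_arc n k X Y \<longleftrightarrow> X \<in> M_verts n k \<and> Y \<in> M_verts n k \<and>
     (\<exists>x\<in>X. \<exists>y\<in>Y. TK_arc n k x y \<and> (x, y) \<notin> M_ident n k)"

end

theory Submission
  imports Defs "HOL-Library.Sublist" "HOL-Combinatorics.Transposition"
begin

text \<open>The identification classes are the pairs {((v,i),-), ((v a_i,i),+)}, so M(n,k) is
  isomorphic to the digraph D on F \<times> {0..<n} with arcs (v,i) \<rightarrow> (u,j) whenever i \<noteq> j and
  v = u a_j. Each vertex (v,i) of D has exactly one out-neighbour (v a_j^{-1}, j) and one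
  in-neighbour (v a_i, j) for every colour j \<noteq> i, which gives the degrees.

  D is highly arc-transitive: left multiplication by a generator is an automorphism, and so is,
  for a word p and two generators a_a, a_b other than the last letter of p, the map that
  interchanges a_a and a_b in everything hanging below p (and in the colour). Using these, any
  arc can be moved, vertex by vertex, onto one fixed standard arc.

  Finally, a homomorphism onto the line takes the same value on (v,i) and (v,i'), since these have
  a common out-neighbour when n \<ge> 3; hence it drops by one along v \<mapsto> v a_0, which is
  impossible because a_0 has order k.\<close>

section \<open>Digraph automorphisms and isomorphisms\<close>

lemma bij_betw_if_funpow_id:
  assumes into: "\<And>x. x \<in> S \<Longrightarrow> f x \<in> S"
    and period: "\<And>x. x \<in> S \<Longrightarrow> (f ^^ m) x = x" and "m > 0"
  shows "bij_betw f S S"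
proof (rule bij_betw_byWitness[where f'="f ^^ (m - 1)"])
  have m: "m = Suc (m - 1)" using \<open>m > 0\<close> by simp
  have funpow_into: "(f ^^ q) x \<in> S" if "x \<in> S" for x q
    using that by (induction q) (auto simp: into)
  show "\<forall>x\<in>S. (f ^^ (m - 1)) (f x) = x"
    using period by (metis m funpow_Suc_right o_apply)
  show "\<forall>x\<in>S. f ((f ^^ (m - 1)) x) = x"
    using period by (metis m funpow.simps(2) o_apply)
  show "f ` S \<subseteq> S" "(f ^^ (m - 1)) ` S \<subseteq> S"
    using into funpow_into by blast+
qed

lemma card_Collect_bij_betw:
  assumes "bij_betw h V W"
  shows "card {y \<in> W. P y} = card {x \<in> V. P (h x)}"
proof -
  have "h ` {x \<in> V. P (h x)} = {y \<in> W. P y}"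
    using assms by (auto simp: bij_betw_def)
  moreover have "inj_on h {x \<in> V. P (h x)}"
    using assms by (auto simp: bij_betw_def intro: inj_on_subset)
  ultimately show ?thesis by (metis card_image)
qed

lemma is_karc_SucE:
  assumes "is_karc V A (Suc m) xs"
  obtains ys x where "xs = ys @ [x]" "is_karc V A m ys" "x \<in> V" "A (ys ! m) x"
proof -
  have len: "length xs = Suc (Suc m)" and sub: "set xs \<subseteq> V"
    and arcs: "\<forall>j<Suc m. A (xs ! j) (xs ! Suc j)"
    using assms by (auto simp: is_karc_def)
  define ys where "ys = butlast xs"
  have ne: "xs \<noteq> []" using len by auto
  then have xs: "xs = ys @ [last xs]" by (simp add: ys_def)
  have ys: "is_karc V A m ys"
    using len sub arcs by (auto simp: is_karc_def ys_def nth_butlast dest: in_set_butlastD)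
  have "last xs = xs ! Suc m" "ys ! m = xs ! m"
    using len ne by (auto simp: ys_def nth_butlast last_conv_nth)
  then have "last xs \<in> V" "A (ys ! m) (last xs)"
    using len sub arcs by (auto simp: nth_mem subsetD)
  with xs ys show ?thesis by (rule that)
qed

lemma digraph_aut_bij: "digraph_aut V A g \<Longrightarrow> bij_betw g V V"
  by (simp add: digraph_aut_def)

lemma digraph_aut_arc_iff:
  "digraph_aut V A g \<Longrightarrow> x \<in> V \<Longrightarrow> y \<in> V \<Longrightarrow> A (g x) (g y) \<longleftrightarrow> A x y"
  by (simp add: digraph_aut_def)

lemma digraph_aut_id: "digraph_aut V A id"
  by (simp add: digraph_aut_def)

lemma digraph_aut_comp:
  assumes "digraph_aut V A f" "digraph_aut V A g"
  shows "digraph_aut V A (f \<circ> g)"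
proof -
  have "g x \<in> V" if "x \<in> V" for x
    using digraph_aut_bij[OF assms(2)] that bij_betwE by blast
  then show ?thesis
    using assms bij_betw_trans[OF digraph_aut_bij[OF assms(2)] digraph_aut_bij[OF assms(1)]]
    by (simp add: digraph_aut_def)
qed

lemma digraph_aut_funpow: "digraph_aut V A g \<Longrightarrow> digraph_aut V A (g ^^ m)"
  by (induction m) (auto simp: digraph_aut_id digraph_aut_comp)

lemma digraph_aut_inv_into:
  assumes aut: "digraph_aut V A g"
  shows "digraph_aut V A (inv_into V g)"
proof -
  have bij: "bij_betw g V V" using aut by (rule digraph_aut_bij)
  have "A (inv_into V g x) (inv_into V g y) \<longleftrightarrow> A x y" if "x \<in> V" "y \<in> V" for x y
  proof -
    have "inv_into V g x \<in> V" "inv_into V g y \<in> V"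
      "g (inv_into V g x) = x" "g (inv_into V g y) = y"
      using that bij by (auto simp: bij_betw_def inv_into_into f_inv_into_f)
    then show ?thesis using digraph_aut_arc_iff[OF aut] by metis
  qed
  then show ?thesis using bij_betw_inv_into[OF bij] by (simp add: digraph_aut_def)
qed

lemma highly_arc_transitive_if_standard_arcs:
  assumes "\<And>m xs. is_karc V A m xs \<Longrightarrow>
             \<exists>g. digraph_aut V A g \<and> map g xs = map std [0..<Suc m]"
  shows "highly_arc_transitive V A"
  unfolding highly_arc_transitive_def
proof (intro allI impI)
  fix m xs ys assume arcs: "is_karc V A m xs \<and> is_karc V A m ys"
  obtain g1 g2 where g1: "digraph_aut V A g1" "map g1 xs = map std [0..<Suc m]"
    and g2: "digraph_aut V A g2" "map g2 ys = map std [0..<Suc m]"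
    using assms arcs by meson
  have "map g1 xs = map g2 ys" using g1(2) g2(2) by simp
  then have "map (inv_into V g2 \<circ> g1) xs = map (inv_into V g2) (map g2 ys)"
    by (metis map_map)
  also have "\<dots> = ys"
    using arcs digraph_aut_bij[OF g2(1)]
    by (auto simp: is_karc_def bij_betw_def intro!: map_idI)
  finally show "\<exists>g. digraph_aut V A g \<and> map g xs = ys"
    using digraph_aut_comp[OF digraph_aut_inv_into[OF g2(1)] g1(1)] by blast
qed

definition line_homomorphism :: "'a set \<Rightarrow> ('a \<Rightarrow> 'a \<Rightarrow> bool) \<Rightarrow> ('a \<Rightarrow> int) \<Rightarrow> bool" where
  "line_homomorphism V A f \<longleftrightarrow> (\<forall>x\<in>V. \<forall>y\<in>V. A x y \<longrightarrow> f y = f x + 1)"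

lemma has_property_Z_imp_line_homomorphism:
  "has_property_Z V A \<Longrightarrow> \<exists>f. line_homomorphism V A f"
  by (auto simp: has_property_Z_def line_homomorphism_def)

locale digraph_iso =
  fixes V :: "'a set" and A :: "'a \<Rightarrow> 'a \<Rightarrow> bool"
    and W :: "'b set" and B :: "'b \<Rightarrow> 'b \<Rightarrow> bool" and h :: "'a \<Rightarrow> 'b"
  assumes bij: "bij_betw h V W"
    and arc_iff: "\<And>x y. x \<in> V \<Longrightarrow> y \<in> V \<Longrightarrow> B (h x) (h y) \<longleftrightarrow> A x y"
begin

lemma in_degree_eq: "x \<in> V \<Longrightarrow> in_degree W B (h x) = in_degree V A x"
  unfolding in_degree_def by (simp add: card_Collect_bij_betw[OF bij] arc_iff cong: conj_cong)

lemma out_degree_eq: "x \<in> V \<Longrightarrow> out_degree W B (h x) = out_degree V A x"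
  unfolding out_degree_def by (simp add: card_Collect_bij_betw[OF bij] arc_iff cong: conj_cong)

lemma degrees_transfer:
  assumes "\<And>x. x \<in> V \<Longrightarrow> in_degree V A x = d \<and> out_degree V A x = d"
  shows "\<forall>X\<in>W. in_degree W B X = d \<and> out_degree W B X = d"
proof
  fix X assume "X \<in> W"
  then obtain x where x: "x \<in> V" and X: "X = h x" using bij by (auto simp: bij_betw_def)
  show "in_degree W B X = d \<and> out_degree W B X = d"
    using assms[OF x] by (simp add: X in_degree_eq[OF x] out_degree_eq[OF x])
qed

lemma line_homomorphism_comp: "line_homomorphism W B f \<Longrightarrow> line_homomorphism V A (f \<circ> h)"
  using bij arc_iff by (auto simp: line_homomorphism_def bij_betw_def)

lemma line_homomorphism_if_has_property_Z:
  "has_property_Z W B \<Longrightarrow> \<exists>f. line_homomorphism V A f"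
  using has_property_Z_imp_line_homomorphism line_homomorphism_comp by blast

lemma is_karc_map:
  assumes "is_karc V A m xs"
  shows "is_karc W B m (map h xs)"
proof -
  have "xs ! j \<in> V" if "j \<le> m" for j
    using assms that by (metis is_karc_def le_imp_less_Suc nth_mem subsetD)
  then show ?thesis using assms bij arc_iff by (auto simp: is_karc_def bij_betw_def)
qed

lemma digraph_iso_inv_into: "digraph_iso W B V A (inv_into V h)"
proof
  show "bij_betw (inv_into V h) W V" using bij by (rule bij_betw_inv_into)
  fix X Y assume "X \<in> W" "Y \<in> W"
  then show "A (inv_into V h X) (inv_into V h Y) \<longleftrightarrow> B X Y"
    using bij arc_iff by (auto simp: bij_betw_def inv_into_into f_inv_into_f)
qed

lemma digraph_aut_conj:
  assumes aut: "digraph_aut V A g"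
  shows "digraph_aut W B (h \<circ> g \<circ> inv_into V h)"
proof -
  interpret inv: digraph_iso W B V A "inv_into V h" by (rule digraph_iso_inv_into)
  have "bij_betw (h \<circ> g \<circ> inv_into V h) W W"
    using bij_betw_trans[OF bij_betw_trans[OF inv.bij digraph_aut_bij[OF aut]] bij]
    by (simp only: comp_assoc)
  moreover have "B (h (g (inv_into V h X))) (h (g (inv_into V h Y))) \<longleftrightarrow> B X Y"
    if "X \<in> W" "Y \<in> W" for X Y
  proof -
    have "inv_into V h X \<in> V" "inv_into V h Y \<in> V"
      using that inv.bij by (auto dest: bij_betwE)
    moreover have "g (inv_into V h X) \<in> V" "g (inv_into V h Y) \<in> V"
      using calculation digraph_aut_bij[OF aut] by (auto dest: bij_betwE)
    ultimately show ?thesis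
      using that arc_iff digraph_aut_arc_iff[OF aut] inv.arc_iff by simp
  qed
  ultimately show ?thesis by (simp add: digraph_aut_def)
qed

lemma highly_arc_transitive_transfer:
  assumes "highly_arc_transitive V A"
  shows "highly_arc_transitive W B"
  unfolding highly_arc_transitive_def
proof (intro allI impI)
  interpret inv: digraph_iso W B V A "inv_into V h" by (rule digraph_iso_inv_into)
  fix m XS YS assume arcs: "is_karc W B m XS \<and> is_karc W B m YS"
  then obtain g where g: "digraph_aut V A g"
    "map g (map (inv_into V h) XS) = map (inv_into V h) YS"
    using assms inv.is_karc_map unfolding highly_arc_transitive_def by meson
  have "map (h \<circ> g \<circ> inv_into V h) XS = map h (map (inv_into V h) YS)"
    using g(2) by (metis map_map)
  also have "\<dots> = YS"
    using arcs bij by (auto simp: is_karc_def bij_betw_def f_inv_into_f intro!: map_idI)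
  finally show "\<exists>G. digraph_aut W B G \<and> map G XS = YS"
    using digraph_aut_conj[OF g(1)] by blast
qed

end

section \<open>Reduced words in the free product\<close>

lemma fp_words_iff_successively:
  "w \<in> fp_words n k \<longleftrightarrow>
     (\<forall>x\<in>set w. fst x < n \<and> 0 < snd x \<and> snd x < k) \<and> successively (\<lambda>x y. fst x \<noteq> fst y) w"
  unfolding fp_words_def successively_conv_nth by (auto simp: split_beta)

lemma Nil_in_fp_words [simp]: "[] \<in> fp_words n k"
  by (simp add: fp_words_iff_successively)

lemma append_in_fp_words_iff:
  "xs @ ys \<in> fp_words n k \<longleftrightarrow> xs \<in> fp_words n k \<and> ys \<in> fp_words n k \<and>
     (xs = [] \<or> ys = [] \<or> fst (last xs) \<noteq> fst (hd ys))"
  unfolding fp_words_iff_successively successively_append_iff by auto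

lemma Cons_in_fp_words_iff:
  "s # w \<in> fp_words n k \<longleftrightarrow> fst s < n \<and> 0 < snd s \<and> snd s < k \<and> w \<in> fp_words n k \<and>
     (w = [] \<or> fst s \<noteq> fst (hd w))"
  unfolding fp_words_iff_successively successively_Cons by auto

lemma singleton_in_fp_words_iff [simp]: "[s] \<in> fp_words n k \<longleftrightarrow> fst s < n \<and> 0 < snd s \<and> snd s < k"
  by (simp add: Cons_in_fp_words_iff)

lemma rev_in_fp_words_iff [simp]: "rev w \<in> fp_words n k \<longleftrightarrow> w \<in> fp_words n k"
proof -
  have "successively (\<lambda>x y. fst y \<noteq> fst x) w \<longleftrightarrow> successively (\<lambda>x y. fst x \<noteq> fst y) w"
    by (rule successively_cong) auto
  then show ?thesis unfolding fp_words_iff_successively by simp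
qed

definition ends_with :: "nat \<Rightarrow> fpword \<Rightarrow> bool" where
  "ends_with i w \<longleftrightarrow> w \<noteq> [] \<and> fst (last w) = i"

lemma ends_withE:
  assumes "ends_with i w"
  obtains u e where "w = u @ [(i, e)]"
  using assms unfolding ends_with_def by (metis append_butlast_last_id prod.collapse)

abbreviation fp_rmul_pow :: "nat \<Rightarrow> nat \<Rightarrow> nat \<Rightarrow> fpword \<Rightarrow> fpword" where
  "fp_rmul_pow k i m \<equiv> (\<lambda>w. fp_rmul_gen k w i) ^^ m"

lemma fp_rmul_gen_not_ends_with: "\<not> ends_with i w \<Longrightarrow> fp_rmul_gen k w i = w @ [(i, 1)]"
  by (auto simp: fp_rmul_gen_def ends_with_def)

lemma fp_rmul_gen_snoc:
  "fp_rmul_gen k (u @ [(i, e)]) i = (if Suc e = k then u else u @ [(i, Suc e)])"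
  by (simp add: fp_rmul_gen_def)

lemma fp_rmul_gen_append:
  "v \<noteq> [] \<Longrightarrow> fp_rmul_gen k (u @ v) i = u @ fp_rmul_gen k v i"
  by (simp add: fp_rmul_gen_def butlast_append)

lemma fp_rmul_gen_in_fp_words:
  assumes "w \<in> fp_words n k" "i < n" "k \<ge> 2"
  shows "fp_rmul_gen k w i \<in> fp_words n k"
proof (cases "ends_with i w")
  case True
  then obtain u e where "w = u @ [(i, e)]" by (rule ends_withE)
  then show ?thesis
    using assms by (auto simp: fp_rmul_gen_snoc append_in_fp_words_iff)
next
  case False
  then show ?thesis
    using assms
    by (auto simp: fp_rmul_gen_not_ends_with append_in_fp_words_iff ends_with_def)
qed

lemma fp_rmul_pow_in_fp_words:
  "w \<in> fp_words n k \<Longrightarrow> i < n \<Longrightarrow> k \<ge> 2 \<Longrightarrow> fp_rmul_pow k i m w \<in> fp_words n k"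
  by (induction m) (auto simp: fp_rmul_gen_in_fp_words)

lemma fp_rmul_pow_not_ends_with:
  "\<not> ends_with i w \<Longrightarrow> 0 < m \<Longrightarrow> m < k \<Longrightarrow> fp_rmul_pow k i m w = w @ [(i, m)]"
proof (induction m)
  case (Suc m)
  then show ?case
    by (cases m) (simp_all add: fp_rmul_gen_not_ends_with fp_rmul_gen_snoc)
qed simp

lemma fp_rmul_pow_order:
  assumes "w \<in> fp_words n k" "k \<ge> 2"
  shows "fp_rmul_pow k i k w = w"
proof -
  have cycle: "fp_rmul_pow k i k u = u" if "\<not> ends_with i u" for u
  proof -
    have k: "k = Suc (k - 1)" using assms(2) by simp
    have "fp_rmul_pow k i k u = fp_rmul_gen k (fp_rmul_pow k i (k - 1) u) i"
      by (subst k) simp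
    also have "\<dots> = u"
      using that assms(2) by (simp add: fp_rmul_pow_not_ends_with fp_rmul_gen_snoc)
    finally show ?thesis .
  qed
  show ?thesis
  proof (cases "ends_with i w")
    case True
    then obtain u e where w: "w = u @ [(i, e)]" by (rule ends_withE)
    have u: "\<not> ends_with i u" "0 < e" "e < k"
      using assms(1) unfolding w by (auto simp: append_in_fp_words_iff ends_with_def)
    have w_pow: "w = fp_rmul_pow k i e u" using fp_rmul_pow_not_ends_with[OF u] w by simp
    have "fp_rmul_pow k i k w = fp_rmul_pow k i e (fp_rmul_pow k i k u)"
      unfolding w_pow by (metis add.commute comp_apply funpow_add)
    then show ?thesis using cycle[OF u(1)] w_pow by simp
  qed (rule cycle)
qed

lemma fp_rmul_gen_inverse:
  assumes "w \<in> fp_words n k" "k \<ge> 2"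
  shows "fp_rmul_pow k i (k - 1) (fp_rmul_gen k w i) = w"
    and "fp_rmul_gen k (fp_rmul_pow k i (k - 1) w) i = w"
proof -
  have k: "k = Suc (k - 1)" using assms(2) by simp
  have "fp_rmul_pow k i k w = w" using fp_rmul_pow_order assms by blast
  then show "fp_rmul_pow k i (k - 1) (fp_rmul_gen k w i) = w"
    and "fp_rmul_gen k (fp_rmul_pow k i (k - 1) w) i = w"
    by (metis k funpow_Suc_right o_apply funpow.simps(2))+
qed

lemma fp_rmul_gen_inj:
  assumes "w \<in> fp_words n k" "w' \<in> fp_words n k" "k \<ge> 2"
    and "fp_rmul_gen k w i = fp_rmul_gen k w' i"
  shows "w = w'"
  using fp_rmul_gen_inverse(1)[OF assms(1,3), of i] fp_rmul_gen_inverse(1)[OF assms(2,3), of i] assms(4)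
  by simp

definition fp_lmul_gen :: "nat \<Rightarrow> nat \<Rightarrow> fpword \<Rightarrow> fpword" where
  "fp_lmul_gen k j w = rev (fp_rmul_gen k (rev w) j)"

lemma fp_lmul_gen_Nil: "fp_lmul_gen k j [] = [(j, 1)]"
  by (simp add: fp_lmul_gen_def fp_rmul_gen_def)

lemma fp_lmul_gen_Cons:
  "fp_lmul_gen k j (s # w) =
     (if fst s = j then (if Suc (snd s) = k then w else (j, Suc (snd s)) # w) else (j, 1) # s # w)"
  by (cases s) (simp add: fp_lmul_gen_def fp_rmul_gen_def)

lemma fp_lmul_gen_in_fp_words:
  "w \<in> fp_words n k \<Longrightarrow> j < n \<Longrightarrow> k \<ge> 2 \<Longrightarrow> fp_lmul_gen k j w \<in> fp_words n k"
  unfolding fp_lmul_gen_def by (simp add: fp_rmul_gen_in_fp_words)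

lemma fp_lmul_gen_funpow: "(fp_lmul_gen k j ^^ m) w = rev (fp_rmul_pow k j m (rev w))"
  by (induction m) (auto simp: fp_lmul_gen_def)

lemma fp_lmul_gen_order: "w \<in> fp_words n k \<Longrightarrow> k \<ge> 2 \<Longrightarrow> (fp_lmul_gen k j ^^ k) w = w"
  by (simp add: fp_lmul_gen_funpow fp_rmul_pow_order)

lemma fp_lmul_gen_inj:
  assumes "w \<in> fp_words n k" "w' \<in> fp_words n k" "k \<ge> 2"
    and "fp_lmul_gen k j w = fp_lmul_gen k j w'"
  shows "w = w'"
  using assms fp_rmul_gen_inj[of "rev w" n k "rev w'" j] by (simp add: fp_lmul_gen_def)

lemma fp_lmul_gen_rmul_gen_commute:
  "fp_lmul_gen k j (fp_rmul_gen k w i) = fp_rmul_gen k (fp_lmul_gen k j w) i"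
proof (cases "length w \<le> 1")
  case True
  then consider "w = []" | s where "w = [s]" by (cases w) auto
  then show ?thesis
  proof cases
    case 1
    then show ?thesis by (auto simp: fp_lmul_gen_Cons fp_lmul_gen_Nil fp_rmul_gen_def)
  next
    case (2 s)
    then show ?thesis by (cases s) (auto simp: fp_lmul_gen_Cons fp_lmul_gen_Nil fp_rmul_gen_def)
  qed
next
  case False
  then obtain s w' where w: "w = s # w'" "w' \<noteq> []" by (cases w) auto
  have rmul_Cons: "fp_rmul_gen k (t # w') i = t # fp_rmul_gen k w' i" for t
    using fp_rmul_gen_append[OF w(2), of k "[t]"] by simp
  show ?thesis
    using rmul_Cons fp_rmul_gen_append[OF w(2), of k "[_, s]"]
    by (auto simp: w fp_lmul_gen_Cons)
qed

lemma fp_lmul_gen_funpow_Cons: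
  "0 < e \<Longrightarrow> e + m < k \<Longrightarrow> (fp_lmul_gen k j ^^ m) ((j, e) # w) = (j, e + m) # w"
  by (induction m) (auto simp: fp_lmul_gen_Cons)

lemma fp_lmul_gen_funpow_cancel:
  assumes "0 < e" "e < k"
  shows "(fp_lmul_gen k j ^^ (k - e)) ((j, e) # w) = w"
proof -
  have ke: "k - e = Suc (k - e - 1)" using assms by simp
  have "(fp_lmul_gen k j ^^ (k - e)) ((j, e) # w) =
        fp_lmul_gen k j ((fp_lmul_gen k j ^^ (k - e - 1)) ((j, e) # w))"
    by (subst ke) simp
  also have "\<dots> = fp_lmul_gen k j ((j, k - 1) # w)"
    using assms fp_lmul_gen_funpow_Cons[of e "k - e - 1" k j w] by simp
  also have "\<dots> = w" using assms by (simp add: fp_lmul_gen_Cons)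
  finally show ?thesis .
qed

section \<open>The digraph M(n,k) as a digraph on F \<times> {0..<n}\<close>

definition D_arc :: "nat \<Rightarrow> nat \<Rightarrow> fpword \<times> nat \<Rightarrow> fpword \<times> nat \<Rightarrow> bool" where
  "D_arc n k x y \<longleftrightarrow> x \<in> Tstar_verts n k \<and> y \<in> Tstar_verts n k \<and> snd x \<noteq> snd y \<and>
     fst x = fp_rmul_gen k (fst y) (snd y)"

definition M_class :: "nat \<Rightarrow> fpword \<times> nat \<Rightarrow> ((fpword \<times> nat) \<times> bool) set" where
  "M_class k x = {(x, False), ((fp_rmul_gen k (fst x) (snd x), snd x), True)}"

lemma Tstar_verts_iff: "(w, i) \<in> Tstar_verts n k \<longleftrightarrow> w \<in> fp_words n k \<and> i < n"
  by (simp add: Tstar_verts_def)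

lemma M_ident_iff:
  "(a, b) \<in> M_ident n k \<longleftrightarrow> snd a = False \<and> fst a \<in> Tstar_verts n k \<and>
     b = ((fp_rmul_gen k (fst (fst a)) (snd (fst a)), snd (fst a)), True)"
  by (cases a; cases "fst a") (auto simp: M_ident_def)

context
  fixes n k :: nat
  assumes k: "k \<ge> 2"
begin

abbreviation M_rel where "M_rel \<equiv> M_ident n k \<union> (M_ident n k)\<inverse>"

text \<open>Right multiplication by a_i is injective, so every class has at most two elements.\<close>

lemma M_rel_twice_eq:
  assumes "(a, b) \<in> M_rel" "(b, c) \<in> M_rel"
  shows "a = c"
proof -
  have "(a, b) \<in> M_ident n k \<and> (c, b) \<in> M_ident n k \<or> (b, a) \<in> M_ident n k \<and> (b, c) \<in> M_ident n k"
    using assms by (auto simp: M_ident_iff)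
  then show ?thesis
  proof
    assume ident: "(a, b) \<in> M_ident n k \<and> (c, b) \<in> M_ident n k"
    obtain v i s v' i' s' where a: "a = ((v, i), s)" and c: "c = ((v', i'), s')"
      by (metis prod.collapse)
    from ident have "i = i'" "s = False" "s' = False" "v \<in> fp_words n k" "v' \<in> fp_words n k"
      "fp_rmul_gen k v i = fp_rmul_gen k v' i'"
      by (auto simp: M_ident_iff a c Tstar_verts_iff)
    then show ?thesis using fp_rmul_gen_inj[OF _ _ k, of v n v' i] by (simp add: a c)
  qed (auto simp: M_ident_iff)
qed

lemma rtrancl_M_rel_iff: "(a, b) \<in> M_rel\<^sup>* \<longleftrightarrow> a = b \<or> (a, b) \<in> M_rel"
proof
  assume "(a, b) \<in> M_rel\<^sup>*"
  then show "a = b \<or> (a, b) \<in> M_rel"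
  proof (induction rule: rtrancl_induct)
    case (step y z)
    then show ?case using M_rel_twice_eq by blast
  qed simp
qed auto

lemma M_rel_class_minus:
  "x \<in> Tstar_verts n k \<Longrightarrow> M_rel\<^sup>* `` {(x, False)} = M_class k x"
  by (auto simp: rtrancl_M_rel_iff M_ident_iff M_class_def)

lemma M_rel_class_plus:
  assumes "(w, i) \<in> Tstar_verts n k"
  shows "M_rel\<^sup>* `` {((w, i), True)} = M_class k (fp_rmul_pow k i (k - 1) w, i)"
proof -
  have w: "w \<in> fp_words n k" "i < n" using assms by (auto simp: Tstar_verts_iff)
  define v where "v = fp_rmul_pow k i (k - 1) w"
  have v: "(v, i) \<in> Tstar_verts n k"
    using w fp_rmul_pow_in_fp_words k by (simp add: v_def Tstar_verts_iff)
  have inverse: "fp_rmul_gen k v i = w"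
    using fp_rmul_gen_inverse(2)[OF w(1) k] by (simp add: v_def)
  have ident: "(z, ((w, i), True)) \<in> M_ident n k \<longleftrightarrow> z = ((v, i), False)" for z
  proof
    assume "(z, ((w, i), True)) \<in> M_ident n k"
    then obtain u where z: "z = ((u, i), False)" "u \<in> fp_words n k" "fp_rmul_gen k u i = w"
      by (cases z) (auto simp: M_ident_iff Tstar_verts_iff)
    then have "u = v" using fp_rmul_gen_inverse(1)[OF z(2) k, of i] by (simp add: v_def)
    then show "z = ((v, i), False)" using z(1) by simp
  qed (use v inverse in \<open>simp add: M_ident_iff\<close>)
  have "M_rel\<^sup>* `` {((w, i), True)} = {((w, i), True)} \<union> {z. (z, ((w, i), True)) \<in> M_ident n k}"
    by (auto simp: rtrancl_M_rel_iff M_ident_iff)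
  also have "\<dots> = M_class k (v, i)"
    using ident inverse by (auto simp: M_class_def)
  finally show ?thesis by (simp only: v_def)
qed

lemma M_verts_eq: "M_verts n k = M_class k ` Tstar_verts n k"
proof -
  have "M_rel\<^sup>* `` {(x, s)} \<in> M_class k ` Tstar_verts n k" if "x \<in> Tstar_verts n k" for x s
  proof (cases s)
    case True
    obtain w i where x: "x = (w, i)" by (cases x)
    have "(fp_rmul_pow k i (k - 1) w, i) \<in> Tstar_verts n k"
      using that x fp_rmul_pow_in_fp_words k by (simp add: Tstar_verts_iff)
    then show ?thesis using M_rel_class_plus that x True by simp
  qed (use M_rel_class_minus that in simp)
  moreover have "M_class k x \<in> M_verts n k" if "x \<in> Tstar_verts n k" for x
    using M_rel_class_minus[OF that] that unfolding M_verts_def TK_verts_def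
    by (metis UNIV_I mem_Sigma_iff quotientI)
  ultimately show ?thesis
    unfolding M_verts_def TK_verts_def by (auto elim!: quotientE)
qed

lemma inj_on_M_class: "inj_on (M_class k) (Tstar_verts n k)"
  by (rule inj_onI) (auto simp: M_class_def doubleton_eq_iff)

lemma M_arc_M_class_iff:
  assumes "x \<in> Tstar_verts n k" "y \<in> Tstar_verts n k"
  shows "M_arc n k (M_class k x) (M_class k y) \<longleftrightarrow> D_arc n k x y"
proof -
  obtain v i u j where x: "x = (v, i)" and y: "y = (u, j)" by (cases x, cases y)
  have "(fp_rmul_gen k u j, j) \<in> Tstar_verts n k"
    using assms y fp_rmul_gen_in_fp_words k by (auto simp: Tstar_verts_iff)
  moreover have "M_class k x \<in> M_verts n k" "M_class k y \<in> M_verts n k"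
    using assms M_verts_eq by auto
  ultimately show ?thesis
    using assms
    by (auto simp: M_arc_def M_class_def TK_arc_def Tstar_arc_def M_ident_iff D_arc_def x y)
qed

lemma digraph_iso_D_M:
  "digraph_iso (Tstar_verts n k) (D_arc n k) (M_verts n k) (M_arc n k) (M_class k)"
proof
  show "bij_betw (M_class k) (Tstar_verts n k) (M_verts n k)"
    unfolding bij_betw_def using inj_on_M_class M_verts_eq by simp
qed (rule M_arc_M_class_iff)

end

section \<open>Degrees of D and homomorphisms onto the line\<close>

context
  fixes n k :: nat
  assumes k: "k \<ge> 2"
begin

lemma D_out_degree:
  assumes "x \<in> Tstar_verts n k"
  shows "out_degree (Tstar_verts n k) (D_arc n k) x = n - 1"
proof -
  obtain v i where x: "x = (v, i)" by (cases x)
  have v: "v \<in> fp_words n k" "i < n" using assms x by (auto simp: Tstar_verts_iff)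
  have "{y \<in> Tstar_verts n k. D_arc n k x y} = (\<lambda>j. (fp_rmul_pow k j (k - 1) v, j)) ` ({..<n} - {i})"
  proof (intro equalityI subsetI)
    fix y assume "y \<in> {y \<in> Tstar_verts n k. D_arc n k x y}"
    then obtain u j where y: "y = (u, j)" "u \<in> fp_words n k" "j < n" "j \<noteq> i" "v = fp_rmul_gen k u j"
      by (cases y) (auto simp: D_arc_def x Tstar_verts_iff)
    then have "u = fp_rmul_pow k j (k - 1) v" using fp_rmul_gen_inverse(1)[OF y(2) k, of j] by simp
    then show "y \<in> (\<lambda>j. (fp_rmul_pow k j (k - 1) v, j)) ` ({..<n} - {i})" using y by auto
  next
    fix y assume "y \<in> (\<lambda>j. (fp_rmul_pow k j (k - 1) v, j)) ` ({..<n} - {i})"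
    then obtain j where y: "y = (fp_rmul_pow k j (k - 1) v, j)" "j < n" "j \<noteq> i" by auto
    then show "y \<in> {y \<in> Tstar_verts n k. D_arc n k x y}"
      using v fp_rmul_pow_in_fp_words[OF v(1) y(2) k] fp_rmul_gen_inverse(2)[OF v(1) k, of j]
      by (auto simp: D_arc_def x Tstar_verts_iff)
  qed
  moreover have "inj_on (\<lambda>j. (fp_rmul_pow k j (k - 1) v, j)) ({..<n} - {i})"
    by (rule inj_onI) simp
  ultimately show ?thesis unfolding out_degree_def using v by (simp add: card_image)
qed

lemma D_in_degree:
  assumes "x \<in> Tstar_verts n k"
  shows "in_degree (Tstar_verts n k) (D_arc n k) x = n - 1"
proof -
  obtain u j where x: "x = (u, j)" by (cases x)
  have u: "u \<in> fp_words n k" "j < n" using assms x by (auto simp: Tstar_verts_iff)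
  have "{y \<in> Tstar_verts n k. D_arc n k y x} = (\<lambda>i. (fp_rmul_gen k u j, i)) ` ({..<n} - {j})"
    using u fp_rmul_gen_in_fp_words[OF u k] by (auto simp: D_arc_def x Tstar_verts_iff)
  moreover have "inj_on (\<lambda>i. (fp_rmul_gen k u j, i)) ({..<n} - {j})"
    by (rule inj_onI) simp
  ultimately show ?thesis unfolding in_degree_def using u by (simp add: card_image)
qed

context
  fixes f :: "fpword \<times> nat \<Rightarrow> int"
  assumes n: "n \<ge> 3" and f: "line_homomorphism (Tstar_verts n k) (D_arc n k) f"
begin

lemma line_homomorphism_D_arc:
  "D_arc n k x y \<Longrightarrow> f y = f x + 1"
  using f by (auto simp: line_homomorphism_def D_arc_def)

text \<open>(w,i) and (w,i') have the common out-neighbour (w a_j^{-1}, j) for a third colour j.\<close>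

lemma line_homomorphism_D_colour_invariant:
  assumes w: "w \<in> fp_words n k" "i < n" "i' < n"
  shows "f (w, i) = f (w, i')"
proof -
  have "\<exists>j\<in>{0, 1, 2 :: nat}. j \<noteq> i \<and> j \<noteq> i'" by auto
  then obtain j where "j \<in> {0, 1, 2 :: nat}" "j \<noteq> i" "j \<noteq> i'" by blast
  with n have j: "j < n" "j \<noteq> i" "j \<noteq> i'" by auto
  define y where "y = (fp_rmul_pow k j (k - 1) w, j)"
  have "y \<in> Tstar_verts n k"
    using fp_rmul_pow_in_fp_words[OF w(1) j(1) k] j by (simp add: y_def Tstar_verts_iff)
  then have "D_arc n k (w, i) y" "D_arc n k (w, i') y"
    using w j fp_rmul_gen_inverse(2)[OF w(1) k, of j] by (auto simp: D_arc_def y_def Tstar_verts_iff)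
  then have "f y = f (w, i) + 1" "f y = f (w, i') + 1" by (auto dest: line_homomorphism_D_arc)
  then show ?thesis by simp
qed

lemma line_homomorphism_D_rmul:
  assumes u: "u \<in> fp_words n k" "j < n"
  shows "f (u, 0) = f (fp_rmul_gen k u j, 0) + 1"
proof -
  define i where "i = (if j = 0 then 1 else (0::nat))"
  have i: "i < n" "i \<noteq> j" using n by (auto simp: i_def)
  have ru: "fp_rmul_gen k u j \<in> fp_words n k" using fp_rmul_gen_in_fp_words[OF u k] .
  have "D_arc n k (fp_rmul_gen k u j, i) (u, j)"
    using ru u i by (auto simp: D_arc_def Tstar_verts_iff)
  then have "f (u, j) = f (fp_rmul_gen k u j, i) + 1" by (rule line_homomorphism_D_arc)
  moreover have "f (u, j) = f (u, 0)" "f (fp_rmul_gen k u j, i) = f (fp_rmul_gen k u j, 0)"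
    using line_homomorphism_D_colour_invariant[OF u, of 0]
      line_homomorphism_D_colour_invariant[OF ru i(1), of 0] n
    by simp_all
  ultimately show ?thesis by simp
qed

lemma line_homomorphism_D_rmul_pow:
  assumes "u \<in> fp_words n k"
  shows "f (u, 0) = f (fp_rmul_pow k 0 m u, 0) + int m"
proof (induction m)
  case (Suc m)
  have "fp_rmul_pow k 0 m u \<in> fp_words n k" using fp_rmul_pow_in_fp_words[OF assms _ k] n by simp
  then show ?case using Suc line_homomorphism_D_rmul[of _ 0] n by simp
qed simp

end

lemma no_line_homomorphism_D:
  assumes "n \<ge> 3"
  shows "\<not> line_homomorphism (Tstar_verts n k) (D_arc n k) f"
proof
  assume "line_homomorphism (Tstar_verts n k) (D_arc n k) f"
  from line_homomorphism_D_rmul_pow[OF assms this Nil_in_fp_words, of k]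
  have "f ([], 0) = f ([], 0) + int k"
    using fp_rmul_pow_order[of "[]" n k 0] k by simp
  then show False using k by simp
qed

end

section \<open>High arc-transitivity of D\<close>

definition D_lmul :: "nat \<Rightarrow> nat \<Rightarrow> fpword \<times> nat \<Rightarrow> fpword \<times> nat" where
  "D_lmul k j x = (fp_lmul_gen k j (fst x), snd x)"

lemma D_lmul_funpow: "(D_lmul k j ^^ m) (w, i) = ((fp_lmul_gen k j ^^ m) w, i)"
  by (induction m) (auto simp: D_lmul_def)

lemma digraph_aut_D_lmul:
  assumes k: "k \<ge> 2" and j: "j < n"
  shows "digraph_aut (Tstar_verts n k) (D_arc n k) (D_lmul k j)"
  unfolding digraph_aut_def
proof (intro conjI ballI)
  have into: "D_lmul k j x \<in> Tstar_verts n k" if "x \<in> Tstar_verts n k" for x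
    using that fp_lmul_gen_in_fp_words[OF _ j k] by (cases x) (simp add: D_lmul_def Tstar_verts_iff)
  show "bij_betw (D_lmul k j) (Tstar_verts n k) (Tstar_verts n k)"
  proof (rule bij_betw_if_funpow_id[OF into])
    show "(D_lmul k j ^^ k) x = x" if "x \<in> Tstar_verts n k" for x
      using that by (cases x) (auto simp: D_lmul_funpow Tstar_verts_iff fp_lmul_gen_order[OF _ k])
  qed (use k in auto)
  fix x y assume x: "x \<in> Tstar_verts n k" and y: "y \<in> Tstar_verts n k"
  obtain w i u j' where xy: "x = (w, i)" "y = (u, j')" by (cases x, cases y)
  have w: "w \<in> fp_words n k" and u: "u \<in> fp_words n k" "j' < n"
    using x y xy by (auto simp: Tstar_verts_iff)
  have "D_arc n k (D_lmul k j x) (D_lmul k j y) \<longleftrightarrow>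
        i \<noteq> j' \<and> fp_lmul_gen k j w = fp_lmul_gen k j (fp_rmul_gen k u j')"
    using into[OF x] into[OF y] by (simp add: D_arc_def D_lmul_def xy fp_lmul_gen_rmul_gen_commute)
  also have "\<dots> \<longleftrightarrow> i \<noteq> j' \<and> w = fp_rmul_gen k u j'"
    using fp_lmul_gen_inj[OF w fp_rmul_gen_in_fp_words[OF u k] k] by blast
  also have "\<dots> \<longleftrightarrow> D_arc n k x y" using x y by (simp add: D_arc_def xy)
  finally show "D_arc n k x y \<longleftrightarrow> D_arc n k (D_lmul k j x) (D_lmul k j y)" by simp
qed

lemma D_aut_to_Nil:
  assumes "k \<ge> 2" "w \<in> fp_words n k"
  shows "\<exists>g. digraph_aut (Tstar_verts n k) (D_arc n k) g \<and> (\<forall>i. g (w, i) = ([], i))"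
  using assms(2)
proof (induction w)
  case Nil
  then show ?case using digraph_aut_id by fastforce
next
  case (Cons s w)
  obtain j e where s: "s = (j, e)" by (cases s)
  have w: "w \<in> fp_words n k" "j < n" "0 < e" "e < k"
    using Cons.prems by (auto simp: Cons_in_fp_words_iff s)
  obtain g where g: "digraph_aut (Tstar_verts n k) (D_arc n k) g" "\<forall>i. g (w, i) = ([], i)"
    using Cons.IH w(1) by blast
  have "digraph_aut (Tstar_verts n k) (D_arc n k) (g \<circ> (D_lmul k j ^^ (k - e)))"
    using digraph_aut_comp[OF g(1) digraph_aut_funpow[OF digraph_aut_D_lmul[OF assms(1) w(2)]]] .
  moreover have "\<forall>i. (g \<circ> (D_lmul k j ^^ (k - e))) (s # w, i) = ([], i)"
    using g(2) fp_lmul_gen_funpow_cancel[OF w(3) w(4)] by (simp add: D_lmul_funpow s)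
  ultimately show ?case by blast
qed

definition swap_gens :: "nat \<Rightarrow> nat \<Rightarrow> fpword \<Rightarrow> fpword" where
  "swap_gens a b = map (\<lambda>(i, e). (transpose a b i, e))"

lemma swap_gens_swap_gens [simp]: "swap_gens a b (swap_gens a b w) = w"
  by (induction w) (auto simp: swap_gens_def)

lemma swap_gens_Nil [simp]: "swap_gens a b [] = []"
  by (simp add: swap_gens_def)

lemma swap_gens_eq_Nil_iff [simp]: "swap_gens a b w = [] \<longleftrightarrow> w = []"
  by (simp add: swap_gens_def)

lemma fst_hd_swap_gens: "w \<noteq> [] \<Longrightarrow> fst (hd (swap_gens a b w)) = transpose a b (fst (hd w))"
  by (cases w) (auto simp: swap_gens_def split_beta)

lemma fp_rmul_gen_swap_gens:
  "fp_rmul_gen k (swap_gens a b w) (transpose a b j) = swap_gens a b (fp_rmul_gen k w j)"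
proof (cases w rule: rev_cases)
  case (snoc u s)
  then show ?thesis
    by (cases s) (auto simp: fp_rmul_gen_def swap_gens_def map_butlast transpose_eq_iff)
qed (simp add: fp_rmul_gen_def swap_gens_def)

lemma swap_gens_in_fp_words:
  assumes "w \<in> fp_words n k" "a < n" "b < n"
  shows "swap_gens a b w \<in> fp_words n k"
proof -
  have "successively (\<lambda>x y. fst x \<noteq> fst y) w" using assms(1) by (simp add: fp_words_iff_successively)
  then have "successively (\<lambda>x y. fst x \<noteq> fst y) (swap_gens a b w)"
    unfolding swap_gens_def successively_map
    by (rule successively_mono) (auto simp: split_beta transpose_eq_iff)
  moreover have "\<forall>x\<in>set (swap_gens a b w). fst x < n \<and> 0 < snd x \<and> snd x < k"
    using assms by (auto simp: swap_gens_def fp_words_iff_successively transpose_def split_beta)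
  ultimately show ?thesis by (simp add: fp_words_iff_successively)
qed

lemma not_prefix_fp_rmul_gen_self:
  assumes "ends_with j p"
  shows "\<not> prefix p (fp_rmul_gen k p j)"
proof -
  obtain u e where p: "p = u @ [(j, e)]" using assms by (rule ends_withE)
  have "\<not> prefix p u" using prefix_length_le by (fastforce simp: p)
  then show ?thesis by (simp add: p fp_rmul_gen_snoc)
qed

lemma prefix_fp_rmul_gen_change:
  assumes "prefix p (fp_rmul_gen k u j) \<noteq> prefix p u"
  shows "ends_with j p \<and> (u = p \<or> fp_rmul_gen k u j = p)"
proof (cases "prefix p u")
  case True
  then obtain d where u: "u = p @ d" by (rule prefixE)
  have "d = []"
  proof (rule ccontr)
    assume "d \<noteq> []"
    then have "prefix p (fp_rmul_gen k u j)" by (simp add: u fp_rmul_gen_append)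
    with assms True show False by simp
  qed
  moreover have "ends_with j p"
  proof (rule ccontr)
    assume "\<not> ends_with j p"
    then have "prefix p (fp_rmul_gen k u j)"
      by (auto simp: u \<open>d = []\<close> fp_rmul_gen_not_ends_with intro: prefixI)
    with assms True show False by simp
  qed
  ultimately show ?thesis by (simp add: u)
next
  case False
  then have rmul: "prefix p (fp_rmul_gen k u j)" using assms by simp
  show ?thesis
  proof (cases "ends_with j u")
    case True
    then obtain v e where u: "u = v @ [(j, e)]" by (rule ends_withE)
    have "\<not> prefix p v" using False by (auto simp: u)
    then show ?thesis
      using rmul by (auto simp: u fp_rmul_gen_snoc ends_with_def split: if_splits)
  next
    case False
    then show ?thesis
      using rmul \<open>\<not> prefix p u\<close> by (auto simp: fp_rmul_gen_not_ends_with ends_with_def)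
  qed
qed

definition swap_below :: "fpword \<Rightarrow> nat \<Rightarrow> nat \<Rightarrow> fpword \<Rightarrow> fpword" where
  "swap_below p a b w = (if prefix p w then p @ swap_gens a b (drop (length p) w) else w)"

definition colour_swap_below :: "fpword \<Rightarrow> nat \<Rightarrow> nat \<Rightarrow> fpword \<Rightarrow> nat \<Rightarrow> nat" where
  "colour_swap_below p a b w = (if prefix p w then transpose a b else id)"

definition branch_swap :: "fpword \<Rightarrow> nat \<Rightarrow> nat \<Rightarrow> fpword \<times> nat \<Rightarrow> fpword \<times> nat" where
  "branch_swap p a b x = (swap_below p a b (fst x), colour_swap_below p a b (fst x) (snd x))"

lemma swap_below_append [simp]: "swap_below p a b (p @ d) = p @ swap_gens a b d"
  by (simp add: swap_below_def)

lemma colour_swap_below_append [simp]: "colour_swap_below p a b (p @ d) = transpose a b"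
  by (auto simp: colour_swap_below_def intro: prefixI)

lemma swap_below_self [simp]: "swap_below p a b p = p"
  using swap_below_append[of p a b "[]"] by simp

lemma prefix_swap_below_iff [simp]: "prefix p (swap_below p a b w) \<longleftrightarrow> prefix p w"
  by (simp add: swap_below_def)

lemma swap_below_swap_below [simp]: "swap_below p a b (swap_below p a b w) = w"
  by (auto simp: swap_below_def elim: prefixE)

lemma branch_swap_branch_swap [simp]: "branch_swap p a b (branch_swap p a b x) = x"
  by (simp add: branch_swap_def colour_swap_below_def)

text \<open>Excluding the last letter of p keeps p followed by a swapped suffix reduced, and makes the
  transposition fix the colour of every arc that crosses into or out of the branch below p.\<close>

locale branch_swap_admissible =
  fixes n k :: nat and p :: fpword and a b :: nat
  assumes p: "p \<in> fp_words n k" and a: "a < n" and b: "b < n"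
    and last_p: "p \<noteq> [] \<Longrightarrow> a \<noteq> fst (last p) \<and> b \<noteq> fst (last p)"
begin

lemma transpose_ends_with: "ends_with j p \<Longrightarrow> transpose a b j = j"
  using last_p by (auto simp: ends_with_def)

lemma swap_below_in_fp_words:
  assumes "w \<in> fp_words n k"
  shows "swap_below p a b w \<in> fp_words n k"
proof (cases "prefix p w")
  case True
  then obtain d where w: "w = p @ d" by (rule prefixE)
  have d: "d \<in> fp_words n k" and join: "p = [] \<or> d = [] \<or> fst (last p) \<noteq> fst (hd d)"
    using assms by (auto simp: w append_in_fp_words_iff)
  have "transpose a b (fst (last p)) = fst (last p)" if "p \<noteq> []"
    using transpose_ends_with that by (simp add: ends_with_def)
  then have "p = [] \<or> d = [] \<or> fst (last p) \<noteq> fst (hd (swap_gens a b d))"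
    using join by (metis fst_hd_swap_gens transpose_eq_imp_eq)
  then show ?thesis
    using swap_gens_in_fp_words[OF d a b] p by (simp add: w append_in_fp_words_iff)
qed (use assms in \<open>simp add: swap_below_def\<close>)

lemma branch_swap_in_Tstar_verts: "x \<in> Tstar_verts n k \<Longrightarrow> branch_swap p a b x \<in> Tstar_verts n k"
  using a b
  by (cases x) (auto simp: branch_swap_def colour_swap_below_def Tstar_verts_iff swap_below_in_fp_words
      transpose_def)

lemma bij_branch_swap: "bij_betw (branch_swap p a b) (Tstar_verts n k) (Tstar_verts n k)"
  by (rule bij_betw_byWitness[where f'="branch_swap p a b"]) (auto simp: branch_swap_in_Tstar_verts)

lemma colour_swap_below_fp_rmul_gen:
  "colour_swap_below p a b (fp_rmul_gen k u j) j = colour_swap_below p a b u j"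
  using prefix_fp_rmul_gen_change[of p k u j] transpose_ends_with
  by (auto simp: colour_swap_below_def)

lemma swap_below_fp_rmul_gen:
  "swap_below p a b (fp_rmul_gen k u j) =
     fp_rmul_gen k (swap_below p a b u) (colour_swap_below p a b u j)"
proof (cases "prefix p (fp_rmul_gen k u j) = prefix p u")
  case False
  then have "ends_with j p" "u = p \<or> fp_rmul_gen k u j = p"
    using prefix_fp_rmul_gen_change by blast+
  then show ?thesis
    using False transpose_ends_with by (auto simp: swap_below_def colour_swap_below_def)
next
  case same: True
  show ?thesis
  proof (cases "prefix p u")
    case True
    then obtain d where u: "u = p @ d" by (rule prefixE)
    show ?thesis
    proof (cases "d = []")
      case True
      then have not_ends: "\<not> ends_with j p"
        using same not_prefix_fp_rmul_gen_self[of j p k] by (auto simp: u)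
      then have "\<not> ends_with (transpose a b j) p"
        using transpose_ends_with by (metis transpose_involutory)
      then show ?thesis
        using not_ends
        by (simp add: u True fp_rmul_gen_not_ends_with colour_swap_below_def swap_gens_def)
    next
      case False
      then show ?thesis
        by (simp add: u fp_rmul_gen_append fp_rmul_gen_swap_gens colour_swap_below_def)
    qed
  qed (use same in \<open>simp add: swap_below_def colour_swap_below_def\<close>)
qed

lemma digraph_aut_branch_swap: "digraph_aut (Tstar_verts n k) (D_arc n k) (branch_swap p a b)"
  unfolding digraph_aut_def
proof (intro conjI bij_branch_swap ballI)
  fix x y assume x: "x \<in> Tstar_verts n k" and y: "y \<in> Tstar_verts n k"
  obtain w i u j where xy: "x = (w, i)" "y = (u, j)" by (cases x, cases y)
  have swapped: "branch_swap p a b x \<in> Tstar_verts n k" "branch_swap p a b y \<in> Tstar_verts n k"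
    using x y by (simp_all add: branch_swap_in_Tstar_verts)
  have "D_arc n k (branch_swap p a b x) (branch_swap p a b y) \<longleftrightarrow>
        colour_swap_below p a b w i \<noteq> colour_swap_below p a b u j \<and>
        swap_below p a b w = swap_below p a b (fp_rmul_gen k u j)"
    using swapped by (simp add: D_arc_def branch_swap_def xy swap_below_fp_rmul_gen)
  also have "\<dots> \<longleftrightarrow> i \<noteq> j \<and> w = fp_rmul_gen k u j"
    using colour_swap_below_fp_rmul_gen[of u j]
    by (metis swap_below_swap_below colour_swap_below_def transpose_eq_imp_eq id_apply)
  also have "\<dots> \<longleftrightarrow> D_arc n k x y" using x y by (simp add: D_arc_def xy)
  finally show "D_arc n k x y \<longleftrightarrow> D_arc n k (branch_swap p a b x) (branch_swap p a b y)" by simp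
qed

end

text \<open>The standard arc ([],0) \<rightarrow> (a_1^{-1},1) \<rightarrow> (a_1^{-1} a_0^{-1},0) \<rightarrow> ... alternates the
  colours 0 and 1.\<close>

fun std_word :: "nat \<Rightarrow> nat \<Rightarrow> fpword" where
  "std_word k 0 = []"
| "std_word k (Suc m) = std_word k m @ [(Suc m mod 2, k - 1)]"

definition std_vertex :: "nat \<Rightarrow> nat \<Rightarrow> fpword \<times> nat" where
  "std_vertex k m = (std_word k m, m mod 2)"

lemma length_std_word [simp]: "length (std_word k m) = m"
  by (induction m) auto

lemma ends_with_std_word: "m > 0 \<Longrightarrow> ends_with (m mod 2) (std_word k m)"
  by (cases m) (auto simp: ends_with_def)

context
  fixes n k :: nat
  assumes k: "k \<ge> 2" and n: "n \<ge> 2"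
begin

lemma std_word_in_fp_words: "std_word k m \<in> fp_words n k"
proof (induction m)
  case (Suc m)
  have "Suc m mod 2 \<noteq> m mod 2" by presburger
  then have "std_word k m = [] \<or> fst (last (std_word k m)) \<noteq> Suc m mod 2"
    using ends_with_std_word[of m k] by (cases m) (auto simp: ends_with_def)
  then show ?case using Suc k n by (auto simp: append_in_fp_words_iff)
qed simp

lemma D_aut_to_std_vertex:
  assumes "x \<in> Tstar_verts n k"
  shows "\<exists>g. digraph_aut (Tstar_verts n k) (D_arc n k) g \<and> g x = std_vertex k 0"
proof -
  obtain w i where x: "x = (w, i)" "w \<in> fp_words n k" "i < n"
    using assms by (cases x) (auto simp: Tstar_verts_iff)
  obtain g where g: "digraph_aut (Tstar_verts n k) (D_arc n k) g" "g (w, i) = ([], i)"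
    using D_aut_to_Nil[OF k x(2)] by blast
  interpret branch_swap_admissible n k "[]" i 0
    using x n by unfold_locales auto
  have "(branch_swap [] i 0 \<circ> g) x = std_vertex k 0"
    using g(2) by (simp add: x branch_swap_def colour_swap_below_def std_vertex_def)
  then show ?thesis using digraph_aut_comp[OF digraph_aut_branch_swap g(1)] by blast
qed

lemma D_aut_extend_std_arc:
  assumes arc: "D_arc n k (std_vertex k m) y"
  shows "\<exists>g. digraph_aut (Tstar_verts n k) (D_arc n k) g \<and>
           (\<forall>t\<le>m. g (std_vertex k t) = std_vertex k t) \<and> g y = std_vertex k (Suc m)"
proof -
  define p where "p = std_word k m"
  obtain u j where y: "y = (u, j)" and u: "u \<in> fp_words n k" "j < n" and j: "j \<noteq> m mod 2"
    and p_eq: "p = fp_rmul_gen k u j"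
    using arc by (cases y) (auto simp: D_arc_def std_vertex_def Tstar_verts_iff p_def)
  have "\<not> ends_with j p"
    using ends_with_std_word[of m k] j by (cases m) (auto simp: p_def ends_with_def)
  then have u_eq: "u = p @ [(j, k - 1)]"
    using fp_rmul_gen_inverse(1)[OF u(1) k, of j] fp_rmul_pow_not_ends_with[of j p "k - 1" k] k p_eq
    by simp
  define c where "c = Suc m mod 2"
  have c: "c < n" "c \<noteq> m mod 2" using n unfolding c_def by presburger+
  interpret branch_swap_admissible n k p j c
  proof
    show "p \<in> fp_words n k" by (simp add: p_def std_word_in_fp_words)
    show "j < n" "c < n" using u c by auto
    assume "p \<noteq> []"
    then have "m > 0" by (cases m) (auto simp: p_def)
    then have "ends_with (m mod 2) p" using ends_with_std_word by (simp add: p_def)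
    then show "j \<noteq> fst (last p) \<and> c \<noteq> fst (last p)" using j c by (auto simp: ends_with_def)
  qed
  have "branch_swap p j c (std_vertex k t) = std_vertex k t" if "t \<le> m" for t
  proof (cases "t = m")
    case True
    then show ?thesis
      using swap_below_self[of p j c] colour_swap_below_append[of p j c "[]"] j c
      by (simp add: branch_swap_def std_vertex_def p_def)
  next
    case False
    then have "\<not> prefix p (std_word k t)" using that by (auto simp: p_def dest: prefix_length_le)
    then show ?thesis by (simp add: branch_swap_def std_vertex_def swap_below_def colour_swap_below_def)
  qed
  moreover have "branch_swap p j c y = std_vertex k (Suc m)"
    by (simp add: y u_eq branch_swap_def std_vertex_def swap_gens_def p_def c_def)
  ultimately show ?thesis using digraph_aut_branch_swap by blast
qed

lemma D_aut_karc_to_std: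
  "is_karc (Tstar_verts n k) (D_arc n k) m xs \<Longrightarrow>
     \<exists>g. digraph_aut (Tstar_verts n k) (D_arc n k) g \<and> map g xs = map (std_vertex k) [0..<Suc m]"
proof (induction m arbitrary: xs)
  case 0
  then obtain x where "xs = [x]" "x \<in> Tstar_verts n k"
    by (auto simp: is_karc_def length_Suc_conv)
  then show ?case using D_aut_to_std_vertex by auto
next
  case (Suc m)
  from Suc.prems obtain ys x
    where xs: "xs = ys @ [x]" and ys: "is_karc (Tstar_verts n k) (D_arc n k) m ys" and x: "x \<in> Tstar_verts n k" and arc: "D_arc n k (ys ! m) x"
    by (rule is_karc_SucE)
  obtain g where g: "digraph_aut (Tstar_verts n k) (D_arc n k) g"
    "map g ys = map (std_vertex k) [0..<Suc m]"
    using Suc.IH[OF ys] by blast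
  have len: "length ys = Suc m" and "ys ! m \<in> Tstar_verts n k"
    using ys by (auto simp: is_karc_def)
  moreover have "g (ys ! m) = std_vertex k m"
    using arg_cong[OF g(2), of "\<lambda>l. l ! m"] len by (simp del: upt_Suc)
  ultimately have "D_arc n k (std_vertex k m) (g x)"
    using digraph_aut_arc_iff[OF g(1) _ x] arc by metis
  then obtain h where h: "digraph_aut (Tstar_verts n k) (D_arc n k) h"
    "\<forall>t\<le>m. h (std_vertex k t) = std_vertex k t" "h (g x) = std_vertex k (Suc m)"
    using D_aut_extend_std_arc by blast
  have fixed: "map h (map (std_vertex k) [0..<Suc m]) = map (std_vertex k) [0..<Suc m]"
    using h(2) by (auto intro!: map_idI)
  have "map (h \<circ> g) xs = map h (map g ys) @ [h (g x)]" by (simp add: xs)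
  also have "\<dots> = map (std_vertex k) [0..<Suc m] @ [std_vertex k (Suc m)]"
    by (simp only: g(2) fixed h(3))
  also have "\<dots> = map (std_vertex k) [0..<Suc (Suc m)]" by simp
  finally show ?case using digraph_aut_comp[OF h(1) g(1)] by blast
qed

lemma highly_arc_transitive_D: "highly_arc_transitive (Tstar_verts n k) (D_arc n k)"
  by (rule highly_arc_transitive_if_standard_arcs[OF D_aut_karc_to_std])

end

theorem corollary5p4:
  fixes n k :: nat
  assumes "n \<ge> 3" and "k \<ge> 2"
  shows "highly_arc_transitive (M_verts n k) (M_arc n k) \<and>
         (\<forall>x\<in>M_verts n k. in_degree (M_verts n k) (M_arc n k) x = n - 1 \<and>
                           out_degree (M_verts n k) (M_arc n k) x = n - 1) \<and>
         \<not> has_property_Z (M_verts n k) (M_arc n k)"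
proof -
  interpret digraph_iso "Tstar_verts n k" "D_arc n k" "M_verts n k" "M_arc n k" "M_class k"
    using assms(2) by (rule digraph_iso_D_M)
  have "highly_arc_transitive (Tstar_verts n k) (D_arc n k)"
    using assms by (intro highly_arc_transitive_D) auto
  then have "highly_arc_transitive (M_verts n k) (M_arc n k)"
    by (rule highly_arc_transitive_transfer)
  moreover have "\<forall>X\<in>M_verts n k. in_degree (M_verts n k) (M_arc n k) X = n - 1 \<and>
                                   out_degree (M_verts n k) (M_arc n k) X = n - 1"
    by (rule degrees_transfer) (simp add: D_in_degree[OF assms(2)] D_out_degree[OF assms(2)])
  moreover have "\<not> has_property_Z (M_verts n k) (M_arc n k)"
    using line_homomorphism_if_has_property_Z no_line_homomorphism_D[OF assms(2,1)] by blast
  ultimately show ?thesis by blast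
qed

end
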